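(* Let $1\le m$ and $m+2\le n$, and let $X_{1:n}\le\cdots\le X_{n:n}$ be the order statistics of an i.i.d. sample of size $n$ from the density $\theta e^{-\theta t}\mathbb{I}_{(0,\infty)}(t)$. Let $X=\sum_{i=1}^m X_{i:n}+(n-m)X_{m:n}$, $Y_1=X_{m+1:n}-X_{m:n}$, $Y_2=X_{m+2:n}-X_{m+1:n}$. Put on $\theta$ the prior $\pi_{\alpha,\beta}(\theta)\propto\theta^{\alpha-1}e^{-\beta\theta}\mathbb{I}_{(0,\infty)}(\theta)$, with either $\alpha,\beta>0$ or $\alpha=\beta=0$. Then for every $x>0$ the Bayes predictive density of $(Y_1,Y_2)$ given $X=x$ is the bivariate Pareto type II density $\mathcal{P}2(m+\alpha,h_1,h_2)$ with $h_1=\frac{n-m}{x+\beta}$, $h_2=\frac{n-m-1}{x+\beta}$, i.e. $\dfrac{(m+\alpha)(m+\alpha+1)h_1h_2}{(1+h_1y_1+h_2y_2)^{m+\alpha+2}}$ on $\mathbb{R}_+^2$.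
   Context: The Bayes predictive density of $Y$ given $X=x$ under prior $\pi$ is $\hat q_\pi(y|x)=\int_0^\infty q_\theta(y|x)\,\pi(\theta|x)\,d\theta$, where $q_\theta(\cdot|x)$ is the conditional density of $Y$ given $X=x$ under parameter $\theta$ and $\pi(\theta|x)$ is the posterior density. *)

theory Defs
  imports "HOL-Probability.Probability"
begin

definition sample_measure :: "nat \<Rightarrow> real \<Rightarrow> (nat \<Rightarrow> real) measure" where
  "sample_measure n \<theta> = PiM {..<n} (\<lambda>_. density lborel (exponential_density \<theta>))"

definition order_stat :: "nat \<Rightarrow> nat \<Rightarrow> (nat \<Rightarrow> real) \<Rightarrow> real" where
  "order_stat n i \<omega> = sort (map \<omega> [0..<n]) ! (i - 1)"

definition statX :: "nat \<Rightarrow> nat \<Rightarrow> (nat \<Rightarrow> real) \<Rightarrow> real" where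
  "statX n m \<omega> = (\<Sum>i=1..m. order_stat n i \<omega>) + real (n - m) * order_stat n m \<omega>"

definition statY :: "nat \<Rightarrow> nat \<Rightarrow> (nat \<Rightarrow> real) \<Rightarrow> real \<times> real" where
  "statY n m \<omega> = (order_stat n (m+1) \<omega> - order_stat n m \<omega>,
                   order_stat n (m+2) \<omega> - order_stat n (m+1) \<omega>)"

definition prior :: "real \<Rightarrow> real \<Rightarrow> real \<Rightarrow> real" where
  "prior \<alpha> \<beta> \<theta> = (if 0 < \<theta> then \<theta> powr (\<alpha> - 1) * exp (- \<beta> * \<theta>) else 0)"

definition marg_X :: "(real \<Rightarrow> real \<Rightarrow> real \<Rightarrow> real \<Rightarrow> real) \<Rightarrow> real \<Rightarrow> real \<Rightarrow> real" where
  "marg_X f \<theta> x = (\<integral>y\<in>{0<..} \<times> {0<..}. f \<theta> x (fst y) (snd y) \<partial>lborel)"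

definition cond_dens :: "(real \<Rightarrow> real \<Rightarrow> real \<Rightarrow> real \<Rightarrow> real) \<Rightarrow> real \<Rightarrow> real \<Rightarrow> real \<Rightarrow> real \<Rightarrow> real" where
  "cond_dens f \<theta> x y1 y2 = f \<theta> x y1 y2 / marg_X f \<theta> x"

definition posterior :: "(real \<Rightarrow> real \<Rightarrow> real \<Rightarrow> real \<Rightarrow> real) \<Rightarrow> real \<Rightarrow> real \<Rightarrow> real \<Rightarrow> real \<Rightarrow> real" where
  "posterior f \<alpha> \<beta> x \<theta> =
     marg_X f \<theta> x * prior \<alpha> \<beta> \<theta> / (\<integral>t\<in>{0<..}. marg_X f t x * prior \<alpha> \<beta> t \<partial>lborel)"

definition bayes_pred :: "(real \<Rightarrow> real \<Rightarrow> real \<Rightarrow> real \<Rightarrow> real) \<Rightarrow> real \<Rightarrow> real \<Rightarrow> real \<Rightarrow> real \<Rightarrow> real \<Rightarrow> real" where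
  "bayes_pred f \<alpha> \<beta> x y1 y2 =
     (\<integral>\<theta>\<in>{0<..}. cond_dens f \<theta> x y1 y2 * posterior f \<alpha> \<beta> x \<theta> \<partial>lborel)"

definition pareto2_biv :: "real \<Rightarrow> real \<Rightarrow> real \<Rightarrow> real \<Rightarrow> real \<Rightarrow> real" where
  "pareto2_biv a h1 h2 y1 y2 = a * (a + 1) * h1 * h2 / (1 + h1 * y1 + h2 * y2) powr (a + 2)"

end

theory Submission
  imports Defs
begin

text \<open>By the Renyi representation, the spacings D(i) = X(i:n) - X(i-1:n) of an exponential sample
  are independent and (n - i + 1) D(i) is exponential of rate \<open>\<theta>\<close>. As
  X = \<open>\<Sum>\<close>(i \<le> m) (n - i + 1) D(i), the statistic X is Gamma with shape m and rate \<open>\<theta>\<close>, while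
  Y1 = D(m+1) and Y2 = D(m+2) are independent of it and exponential of rates (n - m) \<open>\<theta>\<close> and
  (n - m - 1) \<open>\<theta>\<close>; a continuous joint density must be this product on the open orthant.
  Given X = x the Gamma prior is conjugate, the posterior is Gamma with shape m + \<open>\<alpha>\<close> and
  rate x + \<open>\<beta>\<close>, and mixing the exponential likelihood of (Y1, Y2) over it gives the
  bivariate Pareto density.\<close>

section \<open>Sorted samples\<close>

definition seq_of_list :: "real list \<Rightarrow> nat \<Rightarrow> real" where
  "seq_of_list l = (\<lambda>i. if i < length l then l ! i else 0)"

text \<open>Sample values are clamped at \<open>0\<close>. This is irrelevant almost surely, but it makes every
  sorted sample nonnegative, which the insertion identities below need pointwise.\<close>

definition sorted_sample :: "nat \<Rightarrow> (nat \<Rightarrow> real) \<Rightarrow> nat \<Rightarrow> real" where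
  "sorted_sample n \<omega> = seq_of_list (sort (map (\<lambda>i. max 0 (\<omega> i)) [0..<n]))"

text \<open>Insertion into a sorted vector of length \<open>n\<close>, written pointwise so that it is visibly
  measurable; \<open>seq_of_list_insort\<close> relates it to \<^const>\<open>insort\<close>.\<close>

definition insert_sorted :: "nat \<Rightarrow> real \<Rightarrow> (nat \<Rightarrow> real) \<Rightarrow> nat \<Rightarrow> real" where
  "insert_sorted n x v = (\<lambda>i.
     if i = 0 then (if n = 0 then x else min x (v 0))
     else if i < n then max (v (i - 1)) (min x (v i))
     else if i = n then max (v (n - 1)) x else 0)"

text \<open>\<open>shift_cons n t v\<close> is the sorted sample with minimum \<open>t\<close> whose remaining \<open>n\<close> entries exceed
  \<open>t\<close> by \<open>v 0, \<dots>, v (n - 1)\<close>.\<close>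

definition shift_cons :: "nat \<Rightarrow> real \<Rightarrow> (nat \<Rightarrow> real) \<Rightarrow> nat \<Rightarrow> real" where
  "shift_cons n t v = (\<lambda>i. if i = 0 then t else if i \<le> n then v (i - 1) + t else 0)"

lemma nth_insort:
  assumes "sorted l" "i \<le> length l"
  shows "insort x l ! i =
     (if i = 0 then (if l = [] then x else min x (l ! 0))
      else if i < length l then max (l ! (i - 1)) (min x (l ! i))
      else max (l ! (length l - 1)) x)"
  using assms
proof (induction l arbitrary: i)
  case Nil
  then show ?case by simp
next
  case (Cons y ys)
  show ?case
  proof (cases "x \<le> y")
    case True
    then have below: "x \<le> (y # ys) ! k" if "k < length (y # ys)" for k
      using Cons.prems(1) nth_mem[OF that] by auto
    show ?thesis using True Cons.prems below[of "i - 1"] below[of 0] below[of "length ys"]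
      by (cases i) (auto simp: min_def max_def)
  next
    case False
    show ?thesis
    proof (cases i)
      case 0
      then show ?thesis using False by simp
    next
      case (Suc j)
      have above: "\<forall>z\<in>set ys. y \<le> z" using Cons.prems by simp
      show ?thesis
      proof (cases "ys = []")
        case True
        then show ?thesis using Suc False Cons.prems by auto
      next
        case False
        then have "y \<le> ys ! 0" using above by simp
        then show ?thesis
          using Suc \<open>\<not> x \<le> y\<close> Cons.prems Cons.IH[of "i - 1"] False above
          by (auto simp: nth_Cons' min_def max_def)
      qed
    qed
  qed
qed

lemma seq_of_list_insort:
  assumes "sorted l"
  shows "seq_of_list (insort x l) = insert_sorted (length l) x (seq_of_list l)"
proof
  fix i
  show "seq_of_list (insort x l) i = insert_sorted (length l) x (seq_of_list l) i"
  proof (cases "i \<le> length l")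
    case True
    then show ?thesis using nth_insort[OF assms True, of x]
      by (auto simp: seq_of_list_def insert_sorted_def hd_conv_nth)
  next
    case False
    then show ?thesis by (auto simp: seq_of_list_def insert_sorted_def)
  qed
qed

lemma sort_snoc: "sort (xs @ [x]) = insort x (sort xs)"
  by (rule properties_for_sort) (auto simp: sorted_insort)

lemma sorted_sample_0: "sorted_sample 0 \<omega> = (\<lambda>_. 0)"
  by (simp add: sorted_sample_def seq_of_list_def)

lemma sorted_sample_Suc:
  "sorted_sample (Suc n) \<omega> = insert_sorted n (max 0 (\<omega> n)) (sorted_sample n \<omega>)"
  unfolding sorted_sample_def by (simp add: sort_snoc seq_of_list_insort)

lemma sorted_sample_fun_upd: "sorted_sample n (x(n := y)) = sorted_sample n x"
proof -
  have "map (\<lambda>i. max 0 ((x(n := y)) i)) [0..<n] = map (\<lambda>i. max 0 (x i)) [0..<n]"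
    by (rule map_cong) auto
  then show ?thesis unfolding sorted_sample_def by (simp only:)
qed

lemma sorted_sample_eq_seq_of_list:
  obtains l where "sorted_sample n \<omega> = seq_of_list l" "sorted l" "length l = n" "\<forall>x\<in>set l. 0 \<le> x"
  using that unfolding sorted_sample_def by auto

lemma shift_cons_seq_of_list:
  "length l = n \<Longrightarrow> shift_cons n t (seq_of_list l) = seq_of_list (t # map (\<lambda>x. x + t) l)"
  by (auto simp: shift_cons_def seq_of_list_def fun_eq_iff nth_Cons')

lemma insort_map_add:
  fixes x c :: real
  shows "insort (x + c) (map (\<lambda>y. y + c) l) = map (\<lambda>y. y + c) (insort x l)"
  by (induction l) auto

lemma insert_sorted_shift_cons_le:
  assumes "s \<le> t"
  shows "insert_sorted (Suc n) s (shift_cons n t (sorted_sample n \<omega>)) =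
         shift_cons (Suc n) s (shift_cons n (t - s) (sorted_sample n \<omega>))"
proof -
  obtain l where l: "sorted_sample n \<omega> = seq_of_list l" "sorted l" "length l = n" "\<forall>x\<in>set l. 0 \<le> x"
    by (rule sorted_sample_eq_seq_of_list)
  let ?l = "t # map (\<lambda>x. x + t) l"
  have "sorted ?l" using l by (auto simp: sorted_map intro: sorted_wrt_mono_rel)
  have "insert_sorted (Suc n) s (shift_cons n t (sorted_sample n \<omega>)) =
        insert_sorted (length ?l) s (seq_of_list ?l)"
    using l by (simp add: shift_cons_seq_of_list)
  also have "\<dots> = seq_of_list (insort s ?l)"
    by (rule seq_of_list_insort[symmetric]) fact
  also have "\<dots> = seq_of_list (s # ?l)" using assms by simp
  finally show ?thesis using l by (simp add: shift_cons_seq_of_list comp_def)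
qed

lemma insert_sorted_shift_cons_less:
  assumes "t < s"
  shows "insert_sorted (Suc n) s (shift_cons n t (sorted_sample n \<omega>)) =
         shift_cons (Suc n) t (insert_sorted n (s - t) (sorted_sample n \<omega>))"
proof -
  obtain l where l: "sorted_sample n \<omega> = seq_of_list l" "sorted l" "length l = n" "\<forall>x\<in>set l. 0 \<le> x"
    by (rule sorted_sample_eq_seq_of_list)
  let ?l = "t # map (\<lambda>x. x + t) l"
  have "sorted ?l" using l by (auto simp: sorted_map intro: sorted_wrt_mono_rel)
  have "insert_sorted (Suc n) s (shift_cons n t (sorted_sample n \<omega>)) =
        insert_sorted (length ?l) s (seq_of_list ?l)"
    using l by (simp add: shift_cons_seq_of_list)
  also have "\<dots> = seq_of_list (insort s ?l)"
    by (rule seq_of_list_insort[symmetric]) fact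
  also have "\<dots> = seq_of_list (t # map (\<lambda>x. x + t) (insort (s - t) l))"
    using assms insort_map_add[of "s - t" t l] by simp
  also have "\<dots> = shift_cons (Suc n) t (seq_of_list (insort (s - t) l))"
    using l by (simp add: shift_cons_seq_of_list)
  also have "seq_of_list (insort (s - t) l) = insert_sorted n (s - t) (sorted_sample n \<omega>)"
    using l seq_of_list_insort[of l "s - t"] by simp
  finally show ?thesis .
qed

abbreviation seq_borel :: "(nat \<Rightarrow> real) measure" where
  "seq_borel \<equiv> PiM UNIV (\<lambda>_. borel)"

lemma measurable_insert_sorted[measurable]:
  "(\<lambda>(s, v). insert_sorted n s v) \<in> measurable (borel \<Otimes>\<^sub>M seq_borel) seq_borel"
proof -
  have "(\<lambda>z i. insert_sorted n (fst z) (snd z) i) \<in> measurable (borel \<Otimes>\<^sub>M seq_borel) seq_borel"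
  proof (rule measurable_PiM_single')
    fix i :: nat
    show "(\<lambda>z. insert_sorted n (fst z) (snd z) i) \<in> borel_measurable (borel \<Otimes>\<^sub>M seq_borel)"
      unfolding insert_sorted_def by measurable
  qed simp
  then show ?thesis by (simp add: case_prod_beta')
qed

lemma measurable_shift_cons[measurable]:
  "(\<lambda>(t, v). shift_cons n t v) \<in> measurable (borel \<Otimes>\<^sub>M seq_borel) seq_borel"
proof -
  have "(\<lambda>z i. shift_cons n (fst z) (snd z) i) \<in> measurable (borel \<Otimes>\<^sub>M seq_borel) seq_borel"
  proof (rule measurable_PiM_single')
    fix i :: nat
    show "(\<lambda>z. shift_cons n (fst z) (snd z) i) \<in> borel_measurable (borel \<Otimes>\<^sub>M seq_borel)"
      unfolding shift_cons_def by measurable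
  qed simp
  then show ?thesis by (simp add: case_prod_beta')
qed

lemma measurable_sorted_sample:
  assumes "\<And>i. i \<in> I \<Longrightarrow> sets (M i) = sets borel" "{..<n} \<subseteq> I"
  shows "sorted_sample n \<in> measurable (PiM I M) seq_borel"
  using assms(2)
proof (induction n)
  case 0
  show ?case unfolding sorted_sample_0[abs_def] by (rule measurable_const) (simp add: space_PiM)
next
  case (Suc n)
  then have "n \<in> I" by auto
  then have [measurable]: "(\<lambda>\<omega>. \<omega> n) \<in> borel_measurable (PiM I M)"
    using measurable_component_singleton[of n I M] assms(1) measurable_cong_sets by blast
  have [measurable]: "sorted_sample n \<in> measurable (PiM I M) seq_borel"
    using Suc.prems by (intro Suc.IH) auto
  show ?case unfolding sorted_sample_Suc[abs_def] by measurable
qed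

section \<open>Exponential and Erlang integrals\<close>

abbreviation erlang_measure :: "nat \<Rightarrow> real \<Rightarrow> real measure" where
  "erlang_measure k l \<equiv> density lborel (erlang_density k l)"

abbreviation exponential_measure :: "real \<Rightarrow> real measure" where
  "exponential_measure l \<equiv> density lborel (exponential_density l)"

lemma sigma_finite_exponential_measure: "0 < l \<Longrightarrow> sigma_finite_measure (exponential_measure l)"
  by (intro prob_space_imp_sigma_finite prob_space_exponential_density)

lemma nn_integral_erlang_measure:
  "f \<in> borel_measurable borel \<Longrightarrow>
   (\<integral>\<^sup>+x. f x \<partial>erlang_measure k l) = (\<integral>\<^sup>+x. ennreal (erlang_density k l x) * f x \<partial>lborel)"
  by (subst nn_integral_density) auto

lemma measurable_nn_integral_erlang_measure[measurable (raw)]: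
  assumes [measurable]: "(\<lambda>(x, y). f x y) \<in> borel_measurable (N \<Otimes>\<^sub>M borel)"
  shows "(\<lambda>x. \<integral>\<^sup>+y. f x y \<partial>erlang_measure k l) \<in> borel_measurable N"
proof -
  have eq: "(\<integral>\<^sup>+y. f x y \<partial>erlang_measure k l) = (\<integral>\<^sup>+y. ennreal (erlang_density k l y) * f x y \<partial>lborel)"
    if "x \<in> space N" for x
    using that by (intro nn_integral_erlang_measure) measurable
  have "(\<lambda>(x, y). ennreal (erlang_density k l y) * f x y) \<in> borel_measurable (N \<Otimes>\<^sub>M borel)"
    by measurable
  then have "(\<lambda>(x, y). ennreal (erlang_density k l y) * f x y) \<in> borel_measurable (N \<Otimes>\<^sub>M lborel)"
    by (subst measurable_cong_sets[OF sets_pair_measure_cong[OF refl sets_lborel] refl])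
  then have "(\<lambda>x. \<integral>\<^sup>+y. ennreal (erlang_density k l y) * f x y \<partial>lborel) \<in> borel_measurable N"
    by (rule lborel.borel_measurable_nn_integral)
  then show ?thesis
    by (subst measurable_cong[where f="\<lambda>x. \<integral>\<^sup>+y. f x y \<partial>erlang_measure k l"
          and g="\<lambda>x. \<integral>\<^sup>+y. ennreal (erlang_density k l y) * f x y \<partial>lborel"]) (simp_all add: eq)
qed

lemma AE_exponential_measure_pos: "AE x in exponential_measure l. 0 < x"
proof (subst AE_density)
  show "AE x in lborel. 0 < ennreal (exponential_density l x) \<longrightarrow> 0 < x"
    using AE_lborel_singleton[of 0] by eventually_elim (auto simp: exponential_density_def)
qed simp

lemma exponential_density_add:
  "0 \<le> s \<Longrightarrow> 0 \<le> u \<Longrightarrow> exponential_density l (s + u) = exp (- l * s) * exponential_density l u"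
  by (simp add: exponential_density_def exp_add[symmetric] algebra_simps)

lemma nn_integral_lborel_translate:
  fixes f :: "real \<Rightarrow> ennreal"
  assumes "f \<in> borel_measurable borel"
  shows "(\<integral>\<^sup>+t. f t \<partial>lborel) = (\<integral>\<^sup>+u. f (s + u) \<partial>lborel)"
  using nn_integral_real_affine[OF assms, of 1 s] by simp

lemma nn_integral_exponential_measure_memoryless:
  fixes \<psi> :: "real \<Rightarrow> ennreal"
  assumes "0 < l" "0 \<le> s" and [measurable]: "\<psi> \<in> borel_measurable borel"
  shows "(\<integral>\<^sup>+t. (if s \<le> t then \<psi> t else 0) \<partial>exponential_measure l) =
         ennreal (exp (- l * s)) * (\<integral>\<^sup>+u. \<psi> (s + u) \<partial>exponential_measure l)"
proof -
  have "(\<integral>\<^sup>+t. (if s \<le> t then \<psi> t else 0) \<partial>exponential_measure l) =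
        (\<integral>\<^sup>+t. ennreal (exponential_density l t) * (if s \<le> t then \<psi> t else 0) \<partial>lborel)"
    by (rule nn_integral_erlang_measure) measurable
  also have "\<dots> = (\<integral>\<^sup>+u. ennreal (exponential_density l (s + u)) * (if s \<le> s + u then \<psi> (s + u) else 0) \<partial>lborel)"
    by (rule nn_integral_lborel_translate) measurable
  also have "\<dots> = (\<integral>\<^sup>+u. ennreal (exp (- l * s)) * (ennreal (exponential_density l u) * \<psi> (s + u)) \<partial>lborel)"
  proof (rule nn_integral_cong)
    fix u :: real
    show "ennreal (exponential_density l (s + u)) * (if s \<le> s + u then \<psi> (s + u) else 0) =
          ennreal (exp (- l * s)) * (ennreal (exponential_density l u) * \<psi> (s + u))"
      using assms exponential_density_add[of s u l]
      by (cases "0 \<le> u") (auto simp: exponential_density_def ennreal_mult' ac_simps)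
  qed
  also have "\<dots> = ennreal (exp (- l * s)) * (\<integral>\<^sup>+u. ennreal (exponential_density l u) * \<psi> (s + u) \<partial>lborel)"
    by (rule nn_integral_cmult) measurable
  also have "\<dots> = ennreal (exp (- l * s)) * (\<integral>\<^sup>+u. \<psi> (s + u) \<partial>exponential_measure l)"
    by (subst nn_integral_erlang_measure) measurable
  finally show ?thesis .
qed

lemma nn_integral_exponential_measure_tilt:
  fixes h :: "real \<Rightarrow> ennreal"
  assumes "0 < a" "0 < b" and [measurable]: "h \<in> borel_measurable borel"
  shows "(\<integral>\<^sup>+s. ennreal (exp (- b * s)) * h s \<partial>exponential_measure a) =
         (\<integral>\<^sup>+s. ennreal (a / (a + b)) * h s \<partial>exponential_measure (a + b))"
proof -
  have "exponential_density a s * exp (- b * s) = exponential_density (a + b) s * (a / (a + b))" for s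
  proof (cases "s < 0")
    case False
    have "exp (- s * a) * exp (- b * s) = exp (- s * (a + b))"
      by (simp add: exp_add[symmetric] algebra_simps)
    then show ?thesis using False assms by (simp add: exponential_density_def)
  qed (simp add: exponential_density_def)
  then have "ennreal (exponential_density a s) * (ennreal (exp (- b * s)) * h s) =
        ennreal (exponential_density (a + b) s) * (ennreal (a / (a + b)) * h s)" for s
    using assms by (simp add: ennreal_mult'[symmetric] exponential_density_nonneg mult.assoc[symmetric])
  then show ?thesis by (simp add: nn_integral_erlang_measure)
qed

lemma nn_integral_exponential_pair_le:
  fixes \<phi> :: "real \<Rightarrow> real \<Rightarrow> ennreal"
  assumes "0 < a" "0 < b" and [measurable]: "(\<lambda>(s, t). \<phi> s t) \<in> borel_measurable (borel \<Otimes>\<^sub>M borel)"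
  shows "(\<integral>\<^sup>+s. \<integral>\<^sup>+t. (if s \<le> t then \<phi> s t else 0) \<partial>exponential_measure b \<partial>exponential_measure a) =
         (\<integral>\<^sup>+r. ennreal (a / (a + b)) * (\<integral>\<^sup>+u. \<phi> r (r + u) \<partial>exponential_measure b) \<partial>exponential_measure (a + b))"
proof -
  have "(\<integral>\<^sup>+s. \<integral>\<^sup>+t. (if s \<le> t then \<phi> s t else 0) \<partial>exponential_measure b \<partial>exponential_measure a) =
        (\<integral>\<^sup>+s. ennreal (exp (- b * s)) * (\<integral>\<^sup>+u. \<phi> s (s + u) \<partial>exponential_measure b) \<partial>exponential_measure a)"
    using AE_exponential_measure_pos
    by (rule nn_integral_cong_AE[OF eventually_mono])
       (simp add: nn_integral_exponential_measure_memoryless assms(2))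
  also have "\<dots> = (\<integral>\<^sup>+r. ennreal (a / (a + b)) * (\<integral>\<^sup>+u. \<phi> r (r + u) \<partial>exponential_measure b) \<partial>exponential_measure (a + b))"
    using assms(1,2) by (rule nn_integral_exponential_measure_tilt) measurable
  finally show ?thesis .
qed

lemma nn_integral_exponential_pair_gt:
  fixes \<phi> :: "real \<Rightarrow> real \<Rightarrow> ennreal"
  assumes a: "0 < a" and b: "0 < b"
    and [measurable]: "(\<lambda>(s, t). \<phi> s t) \<in> borel_measurable (borel \<Otimes>\<^sub>M borel)"
  shows "(\<integral>\<^sup>+s. \<integral>\<^sup>+t. (if t < s then \<phi> s t else 0) \<partial>exponential_measure b \<partial>exponential_measure a) =
         (\<integral>\<^sup>+r. ennreal (b / (a + b)) * (\<integral>\<^sup>+u. \<phi> (r + u) r \<partial>exponential_measure a) \<partial>exponential_measure (a + b))"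
proof -
  interpret pair_sigma_finite "exponential_measure a" "exponential_measure b"
    by (simp add: pair_sigma_finite_def sigma_finite_exponential_measure a b)
  have \<phi>_swap: "(\<lambda>(t, s). \<phi> s t) \<in> borel_measurable (borel \<Otimes>\<^sub>M borel)"
    by measurable
  have sets_eq: "sets (exponential_measure a \<Otimes>\<^sub>M exponential_measure b) = sets (borel \<Otimes>\<^sub>M borel)"
    by (intro sets_pair_measure_cong) simp_all
  have "(\<integral>\<^sup>+s. \<integral>\<^sup>+t. (if t < s then \<phi> s t else 0) \<partial>exponential_measure b \<partial>exponential_measure a) =
        (\<integral>\<^sup>+t. \<integral>\<^sup>+s. (if t < s then \<phi> s t else 0) \<partial>exponential_measure a \<partial>exponential_measure b)"
    by (rule Fubini'[symmetric]) (unfold measurable_cong_sets[OF sets_eq refl], measurable)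
  also have "\<dots> = (\<integral>\<^sup>+t. \<integral>\<^sup>+s. (if t \<le> s then \<phi> s t else 0) \<partial>exponential_measure a \<partial>exponential_measure b)"
  proof (rule nn_integral_cong)
    fix t
    have "AE s in exponential_measure a. s \<noteq> t"
      by (subst AE_density) (auto intro: eventually_mono[OF AE_lborel_singleton[of t]])
    then show "(\<integral>\<^sup>+s. (if t < s then \<phi> s t else 0) \<partial>exponential_measure a) =
               (\<integral>\<^sup>+s. (if t \<le> s then \<phi> s t else 0) \<partial>exponential_measure a)"
      by (rule nn_integral_cong_AE[OF eventually_mono]) auto
  qed
  also have "\<dots> = (\<integral>\<^sup>+r. ennreal (b / (a + b)) * (\<integral>\<^sup>+u. \<phi> (r + u) r \<partial>exponential_measure a) \<partial>exponential_measure (a + b))"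
    using nn_integral_exponential_pair_le[OF b a \<phi>_swap] by (simp only: add.commute[of b a])
  finally show ?thesis .
qed

text \<open>Competing exponential clocks: the first one rings at rate \<open>a + b\<close>, it is the first with
  probability \<open>a / (a + b)\<close>, and by memorylessness the other then still needs an exponential time.\<close>

lemma nn_integral_exponential_pair:
  fixes \<phi> :: "real \<Rightarrow> real \<Rightarrow> ennreal"
  assumes a: "0 < a" and b: "0 < b"
    and \<phi>[measurable]: "(\<lambda>(s, t). \<phi> s t) \<in> borel_measurable (borel \<Otimes>\<^sub>M borel)"
  shows "(\<integral>\<^sup>+s. \<integral>\<^sup>+t. \<phi> s t \<partial>exponential_measure b \<partial>exponential_measure a) =
         (\<integral>\<^sup>+r. ennreal (a / (a + b)) * (\<integral>\<^sup>+u. \<phi> r (r + u) \<partial>exponential_measure b) +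
                ennreal (b / (a + b)) * (\<integral>\<^sup>+u. \<phi> (r + u) r \<partial>exponential_measure a) \<partial>exponential_measure (a + b))"
proof -
  let ?le = "\<lambda>s t. if s \<le> t then \<phi> s t else 0" and ?gt = "\<lambda>s t. if t < s then \<phi> s t else 0"
  have split: "(\<integral>\<^sup>+t. \<phi> s t \<partial>exponential_measure b) =
        (\<integral>\<^sup>+t. ?le s t \<partial>exponential_measure b) + (\<integral>\<^sup>+t. ?gt s t \<partial>exponential_measure b)" for s
    by (subst nn_integral_add[symmetric]) (measurable, measurable, auto intro: nn_integral_cong)
  have "(\<integral>\<^sup>+s. \<integral>\<^sup>+t. \<phi> s t \<partial>exponential_measure b \<partial>exponential_measure a) =
        (\<integral>\<^sup>+s. \<integral>\<^sup>+t. ?le s t \<partial>exponential_measure b \<partial>exponential_measure a) +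
        (\<integral>\<^sup>+s. \<integral>\<^sup>+t. ?gt s t \<partial>exponential_measure b \<partial>exponential_measure a)"
    unfolding split by (rule nn_integral_add) (measurable, measurable)
  also have "\<dots> = (\<integral>\<^sup>+r. ennreal (a / (a + b)) * (\<integral>\<^sup>+u. \<phi> r (r + u) \<partial>exponential_measure b) \<partial>exponential_measure (a + b)) +
        (\<integral>\<^sup>+r. ennreal (b / (a + b)) * (\<integral>\<^sup>+u. \<phi> (r + u) r \<partial>exponential_measure a) \<partial>exponential_measure (a + b))"
    unfolding nn_integral_exponential_pair_le[OF a b \<phi>] nn_integral_exponential_pair_gt[OF a b \<phi>] ..
  also have "\<dots> = (\<integral>\<^sup>+r. ennreal (a / (a + b)) * (\<integral>\<^sup>+u. \<phi> r (r + u) \<partial>exponential_measure b) +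
                ennreal (b / (a + b)) * (\<integral>\<^sup>+u. \<phi> (r + u) r \<partial>exponential_measure a) \<partial>exponential_measure (a + b))"
    by (rule nn_integral_add[symmetric]) (measurable, measurable)
  finally show ?thesis .
qed

lemma nn_integral_exponential_measure_scale:
  fixes Q :: "real \<Rightarrow> ennreal"
  assumes c: "0 < c" and l: "0 < l" and [measurable]: "Q \<in> borel_measurable borel"
  shows "(\<integral>\<^sup>+t. Q (c * t) \<partial>exponential_measure (c * l)) = (\<integral>\<^sup>+x. Q x \<partial>exponential_measure l)"
proof -
  have dens: "ennreal c * ennreal (exponential_density l (c * t)) = ennreal (exponential_density (c * l) t)" for t
    using c l by (simp add: ennreal_mult'[symmetric] exponential_density_def mult_less_0_iff algebra_simps)
  have "(\<integral>\<^sup>+x. Q x \<partial>exponential_measure l) = (\<integral>\<^sup>+x. ennreal (exponential_density l x) * Q x \<partial>lborel)"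
    by (rule nn_integral_erlang_measure) measurable
  also have "\<dots> = ennreal c * (\<integral>\<^sup>+t. ennreal (exponential_density l (c * t)) * Q (c * t) \<partial>lborel)"
    using nn_integral_real_affine[of "\<lambda>x. ennreal (exponential_density l x) * Q x" c 0] c by simp
  also have "\<dots> = (\<integral>\<^sup>+t. ennreal (exponential_density (c * l) t) * Q (c * t) \<partial>lborel)"
    by (subst nn_integral_cmult[symmetric]) (simp_all add: mult.assoc[symmetric] dens)
  also have "\<dots> = (\<integral>\<^sup>+t. Q (c * t) \<partial>exponential_measure (c * l))"
    by (rule nn_integral_erlang_measure[symmetric]) measurable
  finally show ?thesis ..
qed

lemma nn_integral_erlang_measure_Suc:
  fixes Q :: "real \<Rightarrow> ennreal"
  assumes l: "0 < l" and [measurable]: "Q \<in> borel_measurable borel"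
  shows "(\<integral>\<^sup>+u. \<integral>\<^sup>+x. Q (u + x) \<partial>erlang_measure k l \<partial>exponential_measure l) =
         (\<integral>\<^sup>+z. Q z \<partial>erlang_measure (Suc k) l)"
proof -
  let ?e = "\<lambda>k x. ennreal (erlang_density k l x)"
  have "(\<integral>\<^sup>+u. \<integral>\<^sup>+x. Q (u + x) \<partial>erlang_measure k l \<partial>exponential_measure l) =
        (\<integral>\<^sup>+u. ?e 0 u * (\<integral>\<^sup>+z. ?e k (z - u) * Q z \<partial>lborel) \<partial>lborel)"
  proof (subst nn_integral_erlang_measure, measurable, intro nn_integral_cong)
    fix u :: real
    have "(\<integral>\<^sup>+x. Q (u + x) \<partial>erlang_measure k l) = (\<integral>\<^sup>+x. ?e k x * Q (u + x) \<partial>lborel)"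
      by (rule nn_integral_erlang_measure) measurable
    also have "\<dots> = (\<integral>\<^sup>+z. ?e k (z - u) * Q z \<partial>lborel)"
      by (subst nn_integral_lborel_translate[of _ "- u"]) simp_all
    finally show "?e 0 u * (\<integral>\<^sup>+x. Q (u + x) \<partial>erlang_measure k l) = ?e 0 u * (\<integral>\<^sup>+z. ?e k (z - u) * Q z \<partial>lborel)"
      by simp
  qed
  also have "\<dots> = (\<integral>\<^sup>+u. \<integral>\<^sup>+z. ?e 0 u * (?e k (z - u) * Q z) \<partial>lborel \<partial>lborel)"
    by (intro nn_integral_cong nn_integral_cmult[symmetric]) measurable
  also have "\<dots> = (\<integral>\<^sup>+z. \<integral>\<^sup>+u. ?e 0 u * (?e k (z - u) * Q z) \<partial>lborel \<partial>lborel)"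
    by (subst lborel_pair.Fubini') (simp_all add: case_prod_unfold cong: measurable_cong_sets)
  also have "\<dots> = (\<integral>\<^sup>+z. (\<integral>\<^sup>+u. ?e k (z - u) * ?e 0 u \<partial>lborel) * Q z \<partial>lborel)"
    by (intro nn_integral_cong, subst nn_integral_multc[symmetric]) (measurable, simp add: ac_simps)
  also have "\<dots> = (\<integral>\<^sup>+z. ?e (Suc k) z * Q z \<partial>lborel)"
    using fun_cong[OF convolution_erlang_density[OF l, of k 0]] by simp
  also have "\<dots> = (\<integral>\<^sup>+z. Q z \<partial>erlang_measure (Suc k) l)"
    by (rule nn_integral_erlang_measure[symmetric]) measurable
  finally show ?thesis .
qed

section \<open>The Renyi representation\<close>

definition sorted_nn_integral :: "nat \<Rightarrow> real \<Rightarrow> ((nat \<Rightarrow> real) \<Rightarrow> ennreal) \<Rightarrow> ennreal" where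
  "sorted_nn_integral n \<theta> g = (\<integral>\<^sup>+\<omega>. g (sorted_sample n \<omega>) \<partial>sample_measure n \<theta>)"

lemma prob_space_sample_measure: "0 < \<theta> \<Longrightarrow> prob_space (sample_measure n \<theta>)"
  unfolding sample_measure_def by (intro prob_space_PiM prob_space_exponential_density)

lemma measurable_sorted_sample_sample_measure: "sorted_sample n \<in> measurable (sample_measure n \<theta>) seq_borel"
  unfolding sample_measure_def by (rule measurable_sorted_sample) auto

lemma sorted_nn_integral_cong:
  "(\<And>\<omega>. g (sorted_sample n \<omega>) = h (sorted_sample n \<omega>)) \<Longrightarrow> sorted_nn_integral n \<theta> g = sorted_nn_integral n \<theta> h"
  by (simp add: sorted_nn_integral_def)

lemma sorted_nn_integral_0: "sorted_nn_integral 0 \<theta> g = g (\<lambda>_. 0)"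
  by (simp add: sorted_nn_integral_def sample_measure_def PiM_empty sorted_sample_0)

lemma sorted_nn_integral_const: "0 < \<theta> \<Longrightarrow> sorted_nn_integral n \<theta> (\<lambda>_. c) = c"
  unfolding sorted_nn_integral_def using prob_space.emeasure_space_1[OF prob_space_sample_measure] by simp

lemma measurable_sorted_nn_integral:
  assumes "0 < \<theta>" and G: "(\<lambda>(x, v). G x v) \<in> borel_measurable (N \<Otimes>\<^sub>M seq_borel)"
  shows "(\<lambda>x. sorted_nn_integral n \<theta> (G x)) \<in> borel_measurable N"
proof -
  interpret sigma_finite_measure "sample_measure n \<theta>"
    using prob_space_sample_measure[OF assms(1)] by (rule prob_space_imp_sigma_finite)
  have "(\<lambda>z. (fst z, sorted_sample n (snd z))) \<in> measurable (N \<Otimes>\<^sub>M sample_measure n \<theta>) (N \<Otimes>\<^sub>M seq_borel)"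
    using measurable_sorted_sample_sample_measure by measurable
  from measurable_compose[OF this G]
  have "(\<lambda>(x, \<omega>). G x (sorted_sample n \<omega>)) \<in> borel_measurable (N \<Otimes>\<^sub>M sample_measure n \<theta>)"
    by (simp add: case_prod_beta')
  then show ?thesis unfolding sorted_nn_integral_def by (rule borel_measurable_nn_integral)
qed

lemma sorted_nn_integral_Suc_insert:
  assumes \<theta>: "0 < \<theta>" and g[measurable]: "g \<in> borel_measurable seq_borel"
  shows "sorted_nn_integral (Suc n) \<theta> g =
         (\<integral>\<^sup>+s. sorted_nn_integral n \<theta> (\<lambda>v. g (insert_sorted n s v)) \<partial>exponential_measure \<theta>)"
proof -
  interpret product_sigma_finite "\<lambda>_::nat. exponential_measure \<theta>"
    unfolding product_sigma_finite_def using sigma_finite_exponential_measure[OF \<theta>] by blast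
  have I: "{..<Suc n} = insert n {..<n}" by auto
  have "sorted_sample (Suc n) \<in> measurable (PiM (insert n {..<n}) (\<lambda>_. exponential_measure \<theta>)) seq_borel"
    by (rule measurable_sorted_sample) auto
  then have meas: "(\<lambda>\<omega>. g (sorted_sample (Suc n) \<omega>)) \<in> borel_measurable (PiM (insert n {..<n}) (\<lambda>_. exponential_measure \<theta>))"
    by measurable
  have "sorted_nn_integral (Suc n) \<theta> g =
      (\<integral>\<^sup>+s. \<integral>\<^sup>+x. g (sorted_sample (Suc n) (x(n := s))) \<partial>PiM {..<n} (\<lambda>_. exponential_measure \<theta>) \<partial>exponential_measure \<theta>)"
    unfolding sorted_nn_integral_def sample_measure_def I
    by (rule product_nn_integral_insert_rev[OF _ _ meas]) auto
  also have "\<dots> = (\<integral>\<^sup>+s. sorted_nn_integral n \<theta> (\<lambda>v. g (insert_sorted n (max 0 s) v)) \<partial>exponential_measure \<theta>)"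
    unfolding sorted_nn_integral_def sample_measure_def
    by (simp add: sorted_sample_Suc sorted_sample_fun_upd)
  also have "\<dots> = (\<integral>\<^sup>+s. sorted_nn_integral n \<theta> (\<lambda>v. g (insert_sorted n s v)) \<partial>exponential_measure \<theta>)"
    using AE_exponential_measure_pos
    by (rule nn_integral_cong_AE[OF eventually_mono]) (simp add: max_def)
  finally show ?thesis .
qed

text \<open>The Renyi representation: the minimum of \<open>n + 1\<close> exponential variables of rate \<open>\<theta>\<close> is
  exponential of rate \<open>(n + 1) \<theta>\<close>, and the excesses over it form an independent sorted sample
  of size \<open>n\<close>. In the induction step, the last variable is inserted into the sample and competes
  with the current minimum.\<close>

lemma sorted_nn_integral_Suc_shift_cons_step:
  assumes \<theta>: "0 < \<theta>"
    and IH: "\<And>g. g \<in> borel_measurable seq_borel \<Longrightarrow> sorted_nn_integral (Suc n) \<theta> g =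
      (\<integral>\<^sup>+t. sorted_nn_integral n \<theta> (\<lambda>v. g (shift_cons n t v)) \<partial>exponential_measure (real (Suc n) * \<theta>))"
    and g[measurable]: "g \<in> borel_measurable seq_borel"
  shows "sorted_nn_integral (Suc (Suc n)) \<theta> g =
    (\<integral>\<^sup>+t. sorted_nn_integral (Suc n) \<theta> (\<lambda>v. g (shift_cons (Suc n) t v)) \<partial>exponential_measure (real (Suc (Suc n)) * \<theta>))"
proof -
  define K where "K s t = sorted_nn_integral n \<theta> (\<lambda>v. g (insert_sorted (Suc n) s (shift_cons n t v)))" for s t
  define H where "H r = sorted_nn_integral (Suc n) \<theta> (\<lambda>w. g (shift_cons (Suc n) r w))" for r
  have K_measurable[measurable]: "(\<lambda>(s, t). K s t) \<in> borel_measurable (borel \<Otimes>\<^sub>M borel)"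
    unfolding K_def case_prod_beta' by (rule measurable_sorted_nn_integral[OF \<theta>]) measurable
  let ?N = "real (Suc n) * \<theta>"
  have N: "0 < ?N" using \<theta> by simp
  have min_first: "(\<integral>\<^sup>+u. K r (r + u) \<partial>exponential_measure ?N) = H r" for r
  proof -
    have "(\<integral>\<^sup>+u. K r (r + u) \<partial>exponential_measure ?N) =
          (\<integral>\<^sup>+u. sorted_nn_integral n \<theta> (\<lambda>v. g (shift_cons (Suc n) r (shift_cons n u v))) \<partial>exponential_measure ?N)"
      using AE_exponential_measure_pos
      by (rule nn_integral_cong_AE[OF eventually_mono])
         (auto simp: K_def insert_sorted_shift_cons_le intro: sorted_nn_integral_cong)
    also have "\<dots> = H r"
      unfolding H_def by (rule IH[symmetric]) measurable
    finally show ?thesis .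
  qed
  have min_second: "(\<integral>\<^sup>+u. K (r + u) r \<partial>exponential_measure \<theta>) = H r" for r
  proof -
    have "(\<integral>\<^sup>+u. K (r + u) r \<partial>exponential_measure \<theta>) =
          (\<integral>\<^sup>+u. sorted_nn_integral n \<theta> (\<lambda>v. g (shift_cons (Suc n) r (insert_sorted n u v))) \<partial>exponential_measure \<theta>)"
      using AE_exponential_measure_pos
      by (rule nn_integral_cong_AE[OF eventually_mono])
         (auto simp: K_def insert_sorted_shift_cons_less intro: sorted_nn_integral_cong)
    also have "\<dots> = H r"
      unfolding H_def by (rule sorted_nn_integral_Suc_insert[OF \<theta>, symmetric]) measurable
    finally show ?thesis .
  qed
  have weights: "ennreal (\<theta> / (\<theta> + ?N)) + ennreal (?N / (\<theta> + ?N)) = 1"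
  proof -
    have "\<theta> + ?N \<noteq> 0" using \<theta> N by linarith
    then show ?thesis
      using \<theta> by (simp add: ennreal_plus[symmetric] add_divide_distrib[symmetric] del: ennreal_plus)
  qed
  have "sorted_nn_integral (Suc (Suc n)) \<theta> g =
        (\<integral>\<^sup>+s. sorted_nn_integral (Suc n) \<theta> (\<lambda>w. g (insert_sorted (Suc n) s w)) \<partial>exponential_measure \<theta>)"
    by (rule sorted_nn_integral_Suc_insert[OF \<theta> g])
  also have "\<dots> = (\<integral>\<^sup>+s. \<integral>\<^sup>+t. K s t \<partial>exponential_measure ?N \<partial>exponential_measure \<theta>)"
    unfolding K_def by (intro nn_integral_cong IH) measurable
  also have "\<dots> = (\<integral>\<^sup>+r. ennreal (\<theta> / (\<theta> + ?N)) * H r + ennreal (?N / (\<theta> + ?N)) * H r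
                     \<partial>exponential_measure (\<theta> + ?N))"
    unfolding nn_integral_exponential_pair[OF \<theta> N K_measurable] min_first min_second ..
  also have "\<dots> = (\<integral>\<^sup>+r. H r \<partial>exponential_measure (real (Suc (Suc n)) * \<theta>))"
    unfolding distrib_right[symmetric] weights by (simp add: algebra_simps)
  finally show ?thesis unfolding H_def .
qed

theorem sorted_nn_integral_Suc_shift_cons:
  assumes \<theta>: "0 < \<theta>" and "g \<in> borel_measurable seq_borel"
  shows "sorted_nn_integral (Suc n) \<theta> g =
         (\<integral>\<^sup>+t. sorted_nn_integral n \<theta> (\<lambda>v. g (shift_cons n t v)) \<partial>exponential_measure (real (Suc n) * \<theta>))"
  using assms(2)
proof (induction n arbitrary: g)
  case 0
  have "insert_sorted 0 s (\<lambda>_. 0) = shift_cons 0 s (\<lambda>_. 0)" for s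
    by (auto simp: insert_sorted_def shift_cons_def)
  then show ?case by (simp add: sorted_nn_integral_Suc_insert[OF \<theta> "0.prems"] sorted_nn_integral_0)
next
  case (Suc n)
  then show ?case by (rule sorted_nn_integral_Suc_shift_cons_step[OF \<theta>])
qed

section \<open>The joint density of the statistics\<close>

text \<open>Sorted vectors are indexed from \<open>0\<close>, order statistics from \<open>1\<close>.\<close>

definition statX_sorted :: "nat \<Rightarrow> nat \<Rightarrow> (nat \<Rightarrow> real) \<Rightarrow> real" where
  "statX_sorted n m w = (\<Sum>i<m. w i) + real (n - m) * w (m - 1)"

definition statY_sorted :: "nat \<Rightarrow> (nat \<Rightarrow> real) \<Rightarrow> real \<times> real" where
  "statY_sorted m w = (w m - w (m - 1), w (Suc m) - w m)"

lemma measurable_statX_sorted[measurable]: "statX_sorted n m \<in> borel_measurable seq_borel"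
  unfolding statX_sorted_def by measurable

lemma measurable_statY_sorted[measurable]: "statY_sorted m \<in> measurable seq_borel (borel \<Otimes>\<^sub>M borel)"
  unfolding statY_sorted_def by measurable

lemma statX_sorted_shift_cons:
  assumes "1 \<le> m" "m \<le> n"
  shows "statX_sorted (Suc n) (Suc m) (shift_cons n t v) = real (Suc n) * t + statX_sorted n m v"
proof -
  have "(\<Sum>i<Suc m. shift_cons n t v i) = t + (\<Sum>i<m. shift_cons n t v (Suc i))"
    by (subst sum.lessThan_Suc_shift) (simp add: shift_cons_def)
  also have "(\<Sum>i<m. shift_cons n t v (Suc i)) = (\<Sum>i<m. v i + t)"
    using assms by (intro sum.cong) (auto simp: shift_cons_def)
  finally have "(\<Sum>i<Suc m. shift_cons n t v i) = t + (\<Sum>i<m. v i + t)" .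
  moreover have "shift_cons n t v m = v (m - 1) + t"
    using assms by (simp add: shift_cons_def)
  ultimately show ?thesis
    using assms by (simp add: statX_sorted_def sum.distrib algebra_simps)
qed

lemma statY_sorted_shift_cons:
  "1 \<le> m \<Longrightarrow> m + 2 \<le> n \<Longrightarrow> statY_sorted (Suc m) (shift_cons n t v) = statY_sorted m v"
  by (simp add: statY_sorted_def shift_cons_def)

lemma sorted_nn_integral_statistics_1:
  fixes h :: "real \<times> real \<times> real \<Rightarrow> ennreal" and k :: nat
  assumes \<theta>: "0 < \<theta>" and h: "h \<in> borel_measurable borel"
  defines "n \<equiv> Suc (Suc (Suc k))"
  shows "sorted_nn_integral n \<theta> (\<lambda>w. h (statX_sorted n 1 w, statY_sorted 1 w)) =
    (\<integral>\<^sup>+x. \<integral>\<^sup>+y1. \<integral>\<^sup>+y2. h (x, y1, y2)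
       \<partial>exponential_measure (real (Suc k) * \<theta>) \<partial>exponential_measure (real (Suc (Suc k)) * \<theta>) \<partial>exponential_measure \<theta>)"
proof -
  have [measurable]: "h \<in> borel_measurable (borel \<Otimes>\<^sub>M borel \<Otimes>\<^sub>M borel)"
    using h by (simp add: borel_prod)
  define G where "G = (\<lambda>w. h (statX_sorted n 1 w, statY_sorted 1 w))"
  have [measurable]: "G \<in> borel_measurable seq_borel" unfolding G_def by measurable
  have G_shift: "G (shift_cons (Suc (Suc k)) t (shift_cons (Suc k) u (shift_cons k r w))) = h (real n * t, u, r)"
    for t u r w
    unfolding G_def statX_sorted_def statY_sorted_def n_def by (simp add: shift_cons_def algebra_simps)
  let ?E = "\<lambda>j. exponential_measure (real j * \<theta>)"
  have "sorted_nn_integral n \<theta> G =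
        (\<integral>\<^sup>+t. sorted_nn_integral (Suc (Suc k)) \<theta> (\<lambda>v. G (shift_cons (Suc (Suc k)) t v)) \<partial>?E n)"
    unfolding n_def by (rule sorted_nn_integral_Suc_shift_cons[OF \<theta>]) measurable
  also have "\<dots> = (\<integral>\<^sup>+t. \<integral>\<^sup>+u. sorted_nn_integral (Suc k) \<theta>
      (\<lambda>v. G (shift_cons (Suc (Suc k)) t (shift_cons (Suc k) u v))) \<partial>?E (Suc (Suc k)) \<partial>?E n)"
    by (intro nn_integral_cong sorted_nn_integral_Suc_shift_cons[OF \<theta>]) measurable
  also have "\<dots> = (\<integral>\<^sup>+t. \<integral>\<^sup>+u. \<integral>\<^sup>+r. sorted_nn_integral k \<theta>
      (\<lambda>w. G (shift_cons (Suc (Suc k)) t (shift_cons (Suc k) u (shift_cons k r w))))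
      \<partial>?E (Suc k) \<partial>?E (Suc (Suc k)) \<partial>?E n)"
    by (intro nn_integral_cong sorted_nn_integral_Suc_shift_cons[OF \<theta>]) measurable
  also have "\<dots> = (\<integral>\<^sup>+t. \<integral>\<^sup>+u. \<integral>\<^sup>+r. h (real n * t, u, r) \<partial>?E (Suc k) \<partial>?E (Suc (Suc k)) \<partial>?E n)"
    by (simp add: G_shift sorted_nn_integral_const[OF \<theta>])
  also have "\<dots> = (\<integral>\<^sup>+x. \<integral>\<^sup>+u. \<integral>\<^sup>+r. h (x, u, r)
       \<partial>exponential_measure (real (Suc k) * \<theta>) \<partial>exponential_measure (real (Suc (Suc k)) * \<theta>) \<partial>exponential_measure \<theta>)"
    using \<theta> by (intro nn_integral_exponential_measure_scale[where
        Q="\<lambda>x. \<integral>\<^sup>+u. \<integral>\<^sup>+r. h (x, u, r) \<partial>?E (Suc k) \<partial>?E (Suc (Suc k))"]) (auto simp: h n_def)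
  finally show ?thesis by (simp add: G_def)
qed

text \<open>Removing the minimum \<open>t\<close> of the sample adds \<open>n t\<close>, an exponential variable of rate \<open>\<theta>\<close>,
  to \<open>X\<close> and leaves \<open>Y\<close> unchanged; each such step raises the shape of the Erlang law of \<open>X\<close>.\<close>

lemma sorted_nn_integral_statistics:
  fixes h :: "real \<times> real \<times> real \<Rightarrow> ennreal"
  assumes \<theta>: "0 < \<theta>" and "1 \<le> m" "m + 2 \<le> n" and "h \<in> borel_measurable borel"
  shows "sorted_nn_integral n \<theta> (\<lambda>w. h (statX_sorted n m w, statY_sorted m w)) =
    (\<integral>\<^sup>+x. \<integral>\<^sup>+y1. \<integral>\<^sup>+y2. h (x, y1, y2)
       \<partial>exponential_measure (real (n - m - 1) * \<theta>) \<partial>exponential_measure (real (n - m) * \<theta>) \<partial>erlang_measure (m - 1) \<theta>)"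
  using assms(2-)
proof (induction m arbitrary: n h rule: nat_induct_at_least)
  case base
  define k where "k = n - 3"
  have "n = Suc (Suc (Suc k))" using base.prems(1) unfolding k_def by simp
  then show ?case
    using sorted_nn_integral_statistics_1[OF \<theta> base.prems(2), of k] by simp
next
  case (Suc m)
  note h = Suc.prems(2)
  have [measurable]: "h \<in> borel_measurable (borel \<Otimes>\<^sub>M borel \<Otimes>\<^sub>M borel)"
    using h by (simp add: borel_prod)
  obtain n' where n: "n = Suc n'" using Suc.prems(1) by (cases n) auto
  have mn: "m + 2 \<le> n'" using Suc.prems(1) n by simp
  let ?N = "real n"
  define Q where "Q z = (\<integral>\<^sup>+y1. \<integral>\<^sup>+y2. h (z, y1, y2)
       \<partial>exponential_measure (real (n' - m - 1) * \<theta>) \<partial>exponential_measure (real (n' - m) * \<theta>))" for z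
  have [measurable]: "Q \<in> borel_measurable borel" unfolding Q_def using h by measurable
  have "sorted_nn_integral n \<theta> (\<lambda>w. h (statX_sorted n (Suc m) w, statY_sorted (Suc m) w)) =
        (\<integral>\<^sup>+t. sorted_nn_integral n' \<theta> (\<lambda>v. h (statX_sorted n (Suc m) (shift_cons n' t v),
            statY_sorted (Suc m) (shift_cons n' t v))) \<partial>exponential_measure (?N * \<theta>))"
    unfolding n by (rule sorted_nn_integral_Suc_shift_cons[OF \<theta>]) measurable
  also have "\<dots> = (\<integral>\<^sup>+t. sorted_nn_integral n' \<theta> (\<lambda>v. h (?N * t + statX_sorted n' m v, statY_sorted m v))
                     \<partial>exponential_measure (?N * \<theta>))"
    using Suc.hyps mn by (simp add: n statX_sorted_shift_cons statY_sorted_shift_cons)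
  also have "\<dots> = (\<integral>\<^sup>+t. \<integral>\<^sup>+x. Q (?N * t + x) \<partial>erlang_measure (m - 1) \<theta> \<partial>exponential_measure (?N * \<theta>))"
  proof (rule nn_integral_cong)
    fix t
    have "(\<lambda>(x, y). h (?N * t + x, y)) \<in> borel_measurable (borel \<Otimes>\<^sub>M borel \<Otimes>\<^sub>M borel)"
      by measurable
    then have h_shift: "(\<lambda>(x, y). h (?N * t + x, y)) \<in> borel_measurable borel"
      by (simp add: borel_prod)
    show "sorted_nn_integral n' \<theta> (\<lambda>v. h (?N * t + statX_sorted n' m v, statY_sorted m v)) =
          (\<integral>\<^sup>+x. Q (?N * t + x) \<partial>erlang_measure (m - 1) \<theta>)"
      using Suc.IH[OF mn h_shift] by (simp add: Q_def)
  qed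
  also have "\<dots> = (\<integral>\<^sup>+u. \<integral>\<^sup>+x. Q (u + x) \<partial>erlang_measure (m - 1) \<theta> \<partial>exponential_measure \<theta>)"
    by (rule nn_integral_exponential_measure_scale) (use n \<theta> in auto)
  also have "\<dots> = (\<integral>\<^sup>+z. Q z \<partial>erlang_measure m \<theta>)"
    using nn_integral_erlang_measure_Suc[OF \<theta>, of Q "m - 1"] Suc.hyps by simp
  finally show ?case by (simp add: Q_def n)
qed

lemma order_stat_eq_sorted_sample:
  assumes "\<forall>i<n. 0 \<le> \<omega> i" "1 \<le> i" "i \<le> n"
  shows "order_stat n i \<omega> = sorted_sample n \<omega> (i - 1)"
proof -
  have clamp: "map (\<lambda>i. max 0 (\<omega> i)) [0..<n] = map \<omega> [0..<n]"
    using assms(1) by (intro map_cong) auto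
  show ?thesis
    unfolding order_stat_def sorted_sample_def seq_of_list_def clamp using assms(2,3) by simp
qed

lemma AE_sample_measure_nonneg: "0 < \<theta> \<Longrightarrow> AE \<omega> in sample_measure n \<theta>. \<forall>i<n. 0 \<le> \<omega> i"
proof -
  assume \<theta>: "0 < \<theta>"
  have "AE \<omega> in sample_measure n \<theta>. \<forall>i\<in>{..<n}. 0 \<le> \<omega> i"
  proof (rule AE_finite_allI)
    fix i assume "i \<in> {..<n}"
    moreover have "AE x in exponential_measure \<theta>. 0 \<le> x"
      using AE_exponential_measure_pos by (rule eventually_mono) simp
    ultimately show "AE \<omega> in sample_measure n \<theta>. 0 \<le> \<omega> i"
      unfolding sample_measure_def by (rule AE_PiM_component[OF prob_space_exponential_density[OF \<theta>]])
  qed simp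
  then show ?thesis by (rule eventually_mono) simp
qed

lemma statX_statY_eq_sorted:
  assumes "\<forall>i<n. 0 \<le> \<omega> i" "1 \<le> m" "m + 2 \<le> n"
  shows "statX n m \<omega> = statX_sorted n m (sorted_sample n \<omega>)"
    and "statY n m \<omega> = statY_sorted m (sorted_sample n \<omega>)"
proof -
  have os: "order_stat n i \<omega> = sorted_sample n \<omega> (i - 1)" if "1 \<le> i" "i \<le> n" for i
    using assms(1) that by (rule order_stat_eq_sorted_sample)
  have "(\<Sum>i=1..m. order_stat n i \<omega>) = (\<Sum>i=1..m. sorted_sample n \<omega> (i - 1))"
    using assms by (intro sum.cong) (auto simp: os)
  also have "\<dots> = (\<Sum>i<m. sorted_sample n \<omega> i)"
    using sum.shift_bounds_cl_Suc_ivl[of "\<lambda>i. sorted_sample n \<omega> (i - 1)" 0 "m - 1"] assms(2)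
    by (simp add: atLeast0AtMost lessThan_Suc_atMost[symmetric])
  finally show "statX n m \<omega> = statX_sorted n m (sorted_sample n \<omega>)"
    using assms by (simp add: statX_def statX_sorted_def os)
  show "statY n m \<omega> = statY_sorted m (sorted_sample n \<omega>)"
    using assms by (simp add: statY_def statY_sorted_def os)
qed

definition order_stats_density :: "nat \<Rightarrow> nat \<Rightarrow> real \<Rightarrow> real \<times> real \<times> real \<Rightarrow> real" where
  "order_stats_density n m \<theta> = (\<lambda>(x, y1, y2). erlang_density (m - 1) \<theta> x *
     exponential_density (real (n - m) * \<theta>) y1 * exponential_density (real (n - m - 1) * \<theta>) y2)"

lemma measurable_order_stats_density[measurable]: "order_stats_density n m \<theta> \<in> borel_measurable borel"
  unfolding order_stats_density_def by (subst borel_prod[symmetric])+ measurable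

lemma order_stats_density_nonneg: "0 < \<theta> \<Longrightarrow> 0 \<le> order_stats_density n m \<theta> z"
  unfolding order_stats_density_def by (auto simp: exponential_density_def split: prod.split)

lemma nn_integral_lborel_pair:
  fixes F :: "'a::euclidean_space \<times> 'b::euclidean_space \<Rightarrow> ennreal"
  assumes "F \<in> borel_measurable borel"
  shows "(\<integral>\<^sup>+z. F z \<partial>lborel) = (\<integral>\<^sup>+x. \<integral>\<^sup>+y. F (x, y) \<partial>lborel \<partial>lborel)"
proof -
  have "F \<in> borel_measurable (lborel \<Otimes>\<^sub>M lborel)"
    unfolding lborel_prod using assms by simp
  then show ?thesis
    unfolding lborel_prod[symmetric] by (rule lborel.nn_integral_fst[symmetric])
qed

lemma nn_integral_density_lborel_triple:
  fixes f g k :: "real \<Rightarrow> ennreal" and h :: "real \<times> real \<times> real \<Rightarrow> ennreal"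
  assumes [measurable]: "f \<in> borel_measurable borel" "g \<in> borel_measurable borel" "k \<in> borel_measurable borel"
    and "h \<in> borel_measurable borel"
  shows "(\<integral>\<^sup>+x. \<integral>\<^sup>+y. \<integral>\<^sup>+z. h (x, y, z) \<partial>density lborel k \<partial>density lborel g \<partial>density lborel f) =
         (\<integral>\<^sup>+w. f (fst w) * g (fst (snd w)) * k (snd (snd w)) * h w \<partial>lborel)"
proof -
  have [measurable]: "h \<in> borel_measurable (borel \<Otimes>\<^sub>M borel \<Otimes>\<^sub>M borel)"
    using assms(4) by (simp add: borel_prod)
  have z: "(\<integral>\<^sup>+z. h (x, y, z) \<partial>density lborel k) = (\<integral>\<^sup>+z. k z * h (x, y, z) \<partial>lborel)" for x y
    by (rule nn_integral_density) measurable
  have y: "(\<integral>\<^sup>+y. \<integral>\<^sup>+z. k z * h (x, y, z) \<partial>lborel \<partial>density lborel g) =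
           (\<integral>\<^sup>+y. \<integral>\<^sup>+z. g y * (k z * h (x, y, z)) \<partial>lborel \<partial>lborel)" for x
    by (subst nn_integral_density) (measurable, intro nn_integral_cong nn_integral_cmult[symmetric], measurable)
  have x: "(\<integral>\<^sup>+x. \<integral>\<^sup>+y. \<integral>\<^sup>+z. g y * (k z * h (x, y, z)) \<partial>lborel \<partial>lborel \<partial>density lborel f) =
           (\<integral>\<^sup>+x. \<integral>\<^sup>+y. \<integral>\<^sup>+z. f x * (g y * (k z * h (x, y, z))) \<partial>lborel \<partial>lborel \<partial>lborel)"
    by (subst nn_integral_density) (measurable, intro nn_integral_cong, subst nn_integral_cmult[symmetric],
        measurable, intro nn_integral_cong nn_integral_cmult[symmetric], measurable)
  have "(\<lambda>w. f (fst w) * g (fst (snd w)) * k (snd (snd w)) * h w) \<in> borel_measurable (borel \<Otimes>\<^sub>M borel \<Otimes>\<^sub>M borel)"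
    by measurable
  note outer = nn_integral_lborel_pair[OF this[unfolded borel_prod]]
  have "(\<integral>\<^sup>+w. f (fst w) * g (fst (snd w)) * k (snd (snd w)) * h w \<partial>lborel) =
        (\<integral>\<^sup>+x. \<integral>\<^sup>+w. f x * g (fst w) * k (snd w) * h (x, w) \<partial>lborel \<partial>lborel)"
    using outer by simp
  also have "\<dots> = (\<integral>\<^sup>+x. \<integral>\<^sup>+y. \<integral>\<^sup>+z. f x * (g y * (k z * h (x, y, z))) \<partial>lborel \<partial>lborel \<partial>lborel)"
  proof (rule nn_integral_cong)
    fix x
    have "(\<lambda>w. f x * g (fst w) * k (snd w) * h (x, w)) \<in> borel_measurable (borel \<Otimes>\<^sub>M borel)"
      by measurable
    note inner = nn_integral_lborel_pair[OF this[unfolded borel_prod]]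
    show "(\<integral>\<^sup>+w. f x * g (fst w) * k (snd w) * h (x, w) \<partial>lborel) =
               (\<integral>\<^sup>+y. \<integral>\<^sup>+z. f x * (g y * (k z * h (x, y, z))) \<partial>lborel \<partial>lborel)"
      using inner by (simp add: ac_simps)
  qed
  finally show ?thesis by (simp add: z y x)
qed

lemma nn_integral_order_stats:
  fixes h :: "real \<times> real \<times> real \<Rightarrow> ennreal"
  assumes \<theta>: "0 < \<theta>" and m: "1 \<le> m" and n: "m + 2 \<le> n" and h[measurable]: "h \<in> borel_measurable borel"
  shows "(\<integral>\<^sup>+\<omega>. h (statX n m \<omega>, statY n m \<omega>) \<partial>sample_measure n \<theta>) =
         (\<integral>\<^sup>+z. ennreal (order_stats_density n m \<theta> z) * h z \<partial>lborel)"
proof -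
  have "(\<integral>\<^sup>+\<omega>. h (statX n m \<omega>, statY n m \<omega>) \<partial>sample_measure n \<theta>) =
        sorted_nn_integral n \<theta> (\<lambda>w. h (statX_sorted n m w, statY_sorted m w))"
    unfolding sorted_nn_integral_def
    using AE_sample_measure_nonneg[OF \<theta>]
    by (rule nn_integral_cong_AE[OF eventually_mono]) (simp add: statX_statY_eq_sorted[OF _ m n])
  also have "\<dots> = (\<integral>\<^sup>+x. \<integral>\<^sup>+y1. \<integral>\<^sup>+y2. h (x, y1, y2) \<partial>exponential_measure (real (n - m - 1) * \<theta>)
                     \<partial>exponential_measure (real (n - m) * \<theta>) \<partial>erlang_measure (m - 1) \<theta>)"
    by (rule sorted_nn_integral_statistics[OF \<theta> m n h])
  also have "\<dots> = (\<integral>\<^sup>+z. ennreal (order_stats_density n m \<theta> z) * h z \<partial>lborel)"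
    using \<theta> by (subst nn_integral_density_lborel_triple)
      (measurable, simp add: order_stats_density_def ennreal_mult' exponential_density_nonneg case_prod_beta)
  finally show ?thesis .
qed

lemma continuous_on_ae_eq:
  fixes f g :: "'a::euclidean_space \<Rightarrow> real"
  assumes S: "open S" and f: "continuous_on S f" and g: "continuous_on S g"
    and ae: "AE x in lborel. x \<in> S \<longrightarrow> f x = g x" and p: "p \<in> S"
  shows "f p = g p"
proof (rule ccontr)
  assume "f p \<noteq> g p"
  then have "open (S \<inter> {x. f x - g x \<noteq> 0})" and "p \<in> S \<inter> {x. f x - g x \<noteq> 0}"
    using continuous_open_preimage[OF continuous_on_diff[OF f g] S, of "- {0}"] p
    by (auto simp: vimage_def Int_def conj_commute)
  then obtain e where e: "0 < e" "ball p e \<subseteq> S \<inter> {x. f x - g x \<noteq> 0}"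
    by (meson open_contains_ball)
  have "AE x in lborel. x \<notin> ball p e"
    using ae by eventually_elim (use e in auto)
  then have "ball p e \<in> null_sets lborel"
    by (subst AE_iff_null_sets) auto
  then show False
    using e(1) unit_ball_vol_pos[of "real DIM('a)"] by (simp add: null_sets_def emeasure_ball)
qed

lemma continuous_on_order_stats_density:
  "continuous_on ({0<..} \<times> {0<..} \<times> {0<..}) (order_stats_density n m \<theta>)"
proof -
  let ?A = "real (n - m) * \<theta>" and ?B = "real (n - m - 1) * \<theta>"
  have "continuous_on ({0<..} \<times> {0<..} \<times> {0<..}) (\<lambda>(x, y1, y2).
          \<theta> ^ Suc (m - 1) * x ^ (m - 1) * exp (- \<theta> * x) / fact (m - 1) *
          (?A * exp (- y1 * ?A)) * (?B * exp (- y2 * ?B)))"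
    unfolding case_prod_beta by (intro continuous_intros) auto
  then show ?thesis
    by (rule continuous_on_eq) (auto simp: order_stats_density_def erlang_density_def exponential_density_def ac_simps)
qed

lemma distributed_order_stats_density_AE:
  assumes \<theta>: "0 < \<theta>" and m: "1 \<le> m" and n: "m + 2 \<le> n"
    and p: "distributed (sample_measure n \<theta>) lborel (\<lambda>\<omega>. (statX n m \<omega>, statY n m \<omega>)) (\<lambda>z. ennreal (p z))"
  shows "AE z in lborel. ennreal (p z) = ennreal (order_stats_density n m \<theta> z)"
proof -
  have p_meas[measurable]: "(\<lambda>z. ennreal (p z)) \<in> borel_measurable lborel"
    using p by (simp add: distributed_borel_measurable)
  have q_meas: "(\<lambda>z. ennreal (order_stats_density n m \<theta> z)) \<in> borel_measurable lborel"
    by measurable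
  have "density lborel (\<lambda>z. ennreal (p z)) = density lborel (\<lambda>z. ennreal (order_stats_density n m \<theta> z))"
  proof (rule measure_eqI)
    fix A assume "A \<in> sets (density lborel (\<lambda>z. ennreal (p z)))"
    then have [measurable]: "A \<in> sets borel" by simp
    have "emeasure (density lborel (\<lambda>z. ennreal (p z))) A = (\<integral>\<^sup>+z. ennreal (p z) * indicator A z \<partial>lborel)"
      by (rule emeasure_density) measurable
    also have "\<dots> = (\<integral>\<^sup>+\<omega>. indicator A (statX n m \<omega>, statY n m \<omega>) \<partial>sample_measure n \<theta>)"
      using p by (rule distributed_nn_integral) measurable
    also have "\<dots> = (\<integral>\<^sup>+z. ennreal (order_stats_density n m \<theta> z) * indicator A z \<partial>lborel)"
      by (rule nn_integral_order_stats[OF \<theta> m n]) measurable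
    also have "\<dots> = emeasure (density lborel (\<lambda>z. ennreal (order_stats_density n m \<theta> z))) A"
      by (rule emeasure_density[symmetric]) measurable
    finally show "emeasure (density lborel (\<lambda>z. ennreal (p z))) A =
                  emeasure (density lborel (\<lambda>z. ennreal (order_stats_density n m \<theta> z))) A" .
  qed simp
  then show ?thesis
    using sigma_finite_measure.density_unique_iff[OF sigma_finite_lborel p_meas q_meas] by simp
qed

text \<open>A density is only determined almost everywhere; continuity pins it down on the open orthant.\<close>

lemma continuous_density_eq_order_stats_density:
  fixes f :: "real \<Rightarrow> real \<Rightarrow> real \<Rightarrow> real"
  assumes \<theta>: "0 < \<theta>" and m: "1 \<le> m" and n: "m + 2 \<le> n" and f_nonneg: "\<And>x y1 y2. 0 \<le> f x y1 y2"
    and f: "distributed (sample_measure n \<theta>) lborel (\<lambda>\<omega>. (statX n m \<omega>, statY n m \<omega>))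
          (\<lambda>(x, y1, y2). ennreal (f x y1 y2))"
    and f_cont: "continuous_on ({0<..} \<times> {0<..} \<times> {0<..}) (\<lambda>(x, y1, y2). f x y1 y2)"
    and pos: "0 < x" "0 < y1" "0 < y2"
  shows "f x y1 y2 = order_stats_density n m \<theta> (x, y1, y2)"
proof -
  let ?p = "\<lambda>(x, y1, y2). f x y1 y2"
  have "(\<lambda>(x, y1, y2). ennreal (f x y1 y2)) = (\<lambda>z. ennreal (?p z))"
    by (auto simp: fun_eq_iff)
  with f have "AE z in lborel. ennreal (?p z) = ennreal (order_stats_density n m \<theta> z)"
    by (intro distributed_order_stats_density_AE[OF \<theta> m n]) simp
  then have "AE z in lborel. z \<in> {0<..} \<times> {0<..} \<times> {0<..} \<longrightarrow> ?p z = order_stats_density n m \<theta> z"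
    by eventually_elim (auto simp: f_nonneg order_stats_density_nonneg[OF \<theta>] split: prod.splits)
  moreover have "open ({0<..} \<times> {0<..} \<times> {0<..} :: (real \<times> real \<times> real) set)"
    by (intro open_Times open_greaterThan)
  ultimately have "?p (x, y1, y2) = order_stats_density n m \<theta> (x, y1, y2)"
    using pos by (intro continuous_on_ae_eq[OF _ f_cont continuous_on_order_stats_density]) auto
  then show ?thesis by simp
qed

section \<open>Gamma posterior and Pareto predictive density\<close>

text \<open>Substitute \<open>t = c u\<close> in Euler's integral for \<^const>\<open>Gamma\<close>.\<close>

lemma nn_integral_powr_exp:
  fixes a c :: real
  assumes a: "0 < a" and c: "0 < c"
  shows "(\<integral>\<^sup>+t. ennreal (indicator {0<..} t * (t powr (a - 1) * exp (- (c * t)))) \<partial>lborel) =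
         ennreal (Gamma a / c powr a)"
proof -
  define g where "g t = indicator {0<..} t * (t powr (a - 1) * exp (- (c * t)))" for t :: real
  have [measurable]: "g \<in> borel_measurable borel" unfolding g_def by measurable
  have "ennreal (Gamma a) = (\<integral>\<^sup>+t. ennreal (indicator {0..} t * t powr (a - 1) / exp t) \<partial>lborel)"
    by (rule Gamma_conv_nn_integral_real[OF a])
  also have "\<dots> = ennreal c * (\<integral>\<^sup>+u. ennreal (indicator {0..} (c * u) * (c * u) powr (a - 1) / exp (c * u)) \<partial>lborel)"
    using nn_integral_real_affine[of "\<lambda>t. ennreal (indicator {0..} t * t powr (a - 1) / exp t)" c 0] c by simp
  also have "(\<integral>\<^sup>+u. ennreal (indicator {0..} (c * u) * (c * u) powr (a - 1) / exp (c * u)) \<partial>lborel) =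
             (\<integral>\<^sup>+u. ennreal (c powr (a - 1)) * ennreal (g u) \<partial>lborel)"
    using AE_lborel_singleton[of 0]
  proof (rule nn_integral_cong_AE[OF eventually_mono])
    fix u :: real assume "u \<noteq> 0"
    then consider "0 < u" | "u < 0" by linarith
    then show "ennreal (indicator {0..} (c * u) * (c * u) powr (a - 1) / exp (c * u)) =
               ennreal (c powr (a - 1)) * ennreal (g u)"
    proof cases
      case 1
      then show ?thesis
        using c by (simp add: g_def powr_mult exp_minus field_simps flip: ennreal_mult)
    qed (use c in \<open>simp add: g_def zero_le_mult_iff indicator_def\<close>)
  qed
  also have "ennreal c * (\<integral>\<^sup>+u. ennreal (c powr (a - 1)) * ennreal (g u) \<partial>lborel) =
             ennreal (c powr a) * (\<integral>\<^sup>+u. ennreal (g u) \<partial>lborel)"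
  proof -
    have "c * c powr (a - 1) = c powr a" using c by (simp add: powr_mult_base)
    then show ?thesis
      using c by (subst nn_integral_cmult) (measurable, simp add: mult.assoc[symmetric] flip: ennreal_mult)
  qed
  finally have "ennreal (Gamma a) = ennreal (c powr a) * (\<integral>\<^sup>+u. ennreal (g u) \<partial>lborel)" .
  then have "ennreal (1 / c powr a) * ennreal (Gamma a) = (\<integral>\<^sup>+u. ennreal (g u) \<partial>lborel)"
    using c by (simp add: mult.assoc[symmetric] flip: ennreal_mult)
  then show ?thesis
    using a c by (simp add: g_def less_imp_le flip: ennreal_mult)
qed

lemma set_integral_powr_exp:
  fixes a c :: real
  assumes a: "0 < a" and c: "0 < c"
  shows "(\<integral>t\<in>{0<..}. t powr (a - 1) * exp (- (c * t)) \<partial>lborel) = Gamma a / c powr a"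
proof -
  have "has_bochner_integral lborel (\<lambda>t. indicator {0<..} t * (t powr (a - 1) * exp (- (c * t)))) (Gamma a / c powr a)"
    by (rule has_bochner_integral_nn_integral[OF _ _ _ nn_integral_powr_exp[OF a c]])
       (use a c in \<open>auto simp: less_imp_le\<close>)
  then show ?thesis
    unfolding set_lebesgue_integral_def by (simp add: has_bochner_integral_integral_eq)
qed

lemma set_integral_exponential_density_pair:
  assumes A: "0 < A" and B: "0 < B"
  shows "(\<integral>y\<in>{0<..} \<times> {0<..}. exponential_density A (fst y) * exponential_density B (snd y) \<partial>lborel) = 1"
proof -
  let ?e = "\<lambda>l t. indicator {0<..} t * exponential_density l t"
  have one: "(\<integral>\<^sup>+t. ennreal (?e l t) \<partial>lborel) = 1" if "0 < l" for l
  proof -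
    have "(\<integral>\<^sup>+t. ennreal (?e l t) \<partial>lborel) = (\<integral>\<^sup>+t. ennreal (exponential_density l t) \<partial>lborel)"
      using AE_lborel_singleton[of 0]
      by (rule nn_integral_cong_AE[OF eventually_mono]) (auto simp: indicator_def exponential_density_def)
    then show ?thesis
      using nn_integral_erlang_ith_moment[OF that, of 0 0] by simp
  qed
  define g where "g y = indicator ({0<..} \<times> {0<..}) y * (exponential_density A (fst y) * exponential_density B (snd y))"
    for y :: "real \<times> real"
  have [measurable]: "g \<in> borel_measurable borel"
    unfolding g_def by (subst borel_prod[symmetric]) measurable
  have "(\<integral>\<^sup>+y. ennreal (g y) \<partial>lborel) = (\<integral>\<^sup>+y1. \<integral>\<^sup>+y2. ennreal (g (y1, y2)) \<partial>lborel \<partial>lborel)"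
    by (rule nn_integral_lborel_pair) measurable
  also have "\<dots> = (\<integral>\<^sup>+y1. ennreal (?e A y1) * (\<integral>\<^sup>+y2. ennreal (?e B y2) \<partial>lborel) \<partial>lborel)"
    using A B
    by (intro nn_integral_cong, subst nn_integral_cmult[symmetric])
       (measurable, auto intro!: nn_integral_cong simp: g_def indicator_def exponential_density_nonneg simp flip: ennreal_mult)
  also have "\<dots> = 1"
    using one[OF A] one[OF B] by simp
  finally have "has_bochner_integral lborel g 1"
    by (intro has_bochner_integral_nn_integral) (use A B in \<open>auto simp: g_def exponential_density_nonneg\<close>)
  then show ?thesis
    unfolding set_lebesgue_integral_def g_def by (simp add: has_bochner_integral_integral_eq)
qed

lemma marg_X_eq_erlang_density:
  assumes t: "0 < t" and n: "m + 2 \<le> n"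
    and f: "\<And>y1 y2. 0 < y1 \<Longrightarrow> 0 < y2 \<Longrightarrow> f t x y1 y2 = order_stats_density n m t (x, y1, y2)"
  shows "marg_X f t x = erlang_density (m - 1) t x"
proof -
  let ?A = "real (n - m) * t" and ?B = "real (n - m - 1) * t"
  have "({0<..} \<times> {0<..} :: (real \<times> real) set) \<in> sets lborel"
    by (simp add: borel_open open_Times)
  then have "marg_X f t x = (\<integral>y\<in>{0<..} \<times> {0<..}. erlang_density (m - 1) t x *
           (exponential_density ?A (fst y) * exponential_density ?B (snd y)) \<partial>lborel)"
    unfolding marg_X_def
    by (rule set_lebesgue_integral_cong) (auto simp: f order_stats_density_def mult.assoc)
  also have "\<dots> = erlang_density (m - 1) t x"
    using set_integral_exponential_density_pair[of ?A ?B] t n by simp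
  finally show ?thesis .
qed

lemma cond_dens_eq_exponential_densities:
  assumes t: "0 < t" and x: "0 < x" and "0 < y1" "0 < y2" and n: "m + 2 \<le> n"
    and f: "\<And>y1 y2. 0 < y1 \<Longrightarrow> 0 < y2 \<Longrightarrow> f t x y1 y2 = order_stats_density n m t (x, y1, y2)"
  shows "cond_dens f t x y1 y2 = exponential_density (real (n - m) * t) y1 * exponential_density (real (n - m - 1) * t) y2"
proof -
  have "0 < erlang_density (m - 1) t x"
    using t x by (simp add: erlang_density_def)
  then show ?thesis
    using assms by (simp add: cond_dens_def marg_X_eq_erlang_density order_stats_density_def)
qed

lemma posterior_eq_gamma_density:
  assumes x: "0 < x" and a: "0 < real m + \<alpha>" and c: "0 < x + \<beta>" and m: "1 \<le> m"
    and marg: "\<And>t. 0 < t \<Longrightarrow> marg_X f t x = erlang_density (m - 1) t x"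
    and t: "0 < t"
  shows "posterior f \<alpha> \<beta> x t =
         (x + \<beta>) powr (real m + \<alpha>) / Gamma (real m + \<alpha>) * (t powr (real m + \<alpha> - 1) * exp (- ((x + \<beta>) * t)))"
proof -
  define C where "C = x ^ (m - 1) / fact (m - 1)"
  have C: "0 < C" using x by (simp add: C_def)
  have kernel: "marg_X f s x * prior \<alpha> \<beta> s = C * (s powr (real m + \<alpha> - 1) * exp (- ((x + \<beta>) * s)))"
    if "0 < s" for s
  proof -
    have "marg_X f s x * prior \<alpha> \<beta> s = C * ((s ^ Suc (m - 1) * s powr (\<alpha> - 1)) * (exp (- (s * x)) * exp (- \<beta> * s)))"
      using that x by (simp add: marg erlang_density_def prior_def C_def mult_ac)
    also have "s ^ Suc (m - 1) * s powr (\<alpha> - 1) = s powr (real m + \<alpha> - 1)"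
      using that m by (simp add: powr_realpow[symmetric] powr_add[symmetric] add_diff_eq)
    also have "exp (- (s * x)) * exp (- \<beta> * s) = exp (- ((x + \<beta>) * s))"
      by (simp add: exp_add[symmetric] algebra_simps)
    finally show ?thesis .
  qed
  have "(\<integral>s\<in>{0<..}. marg_X f s x * prior \<alpha> \<beta> s \<partial>lborel) =
        (\<integral>s\<in>{0<..}. C * (s powr (real m + \<alpha> - 1) * exp (- ((x + \<beta>) * s))) \<partial>lborel)"
    by (rule set_lebesgue_integral_cong) (auto simp: kernel)
  also have "\<dots> = C * (Gamma (real m + \<alpha>) / (x + \<beta>) powr (real m + \<alpha>))"
    using set_integral_powr_exp[OF a c] by simp
  finally have normalizer: "(\<integral>s\<in>{0<..}. marg_X f s x * prior \<alpha> \<beta> s \<partial>lborel) =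
      C * (Gamma (real m + \<alpha>) / (x + \<beta>) powr (real m + \<alpha>))" .
  show ?thesis
    unfolding posterior_def normalizer kernel[OF t] using C a c by (simp add: field_simps)
qed

lemma Gamma_plus_2:
  fixes a :: real
  assumes "0 < a"
  shows "Gamma (a + 2) = (a + 1) * a * Gamma a"
proof -
  have "a \<notin> \<int>\<^sub>\<le>\<^sub>0" "a + 1 \<notin> \<int>\<^sub>\<le>\<^sub>0"
    using assms by auto
  then show ?thesis
    using Gamma_plus1[of "a + 1"] Gamma_plus1[of a] by (simp add: add.assoc)
qed

lemma pareto2_biv_eq_Gamma_ratio:
  fixes a c A B y1 y2 :: real
  assumes a: "0 < a" and c: "0 < c" and s: "0 \<le> A * y1 + B * y2"
  shows "A * B * c powr a / Gamma a * (Gamma (a + 2) / (c + (A * y1 + B * y2)) powr (a + 2)) =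
         pareto2_biv a (A / c) (B / c) y1 y2"
proof -
  let ?s = "A * y1 + B * y2"
  have base: "1 + A / c * y1 + B / c * y2 = (c + ?s) / c"
    using c by (simp add: field_simps)
  have pow: "((c + ?s) / c) powr (a + 2) = (c + ?s) powr (a + 2) / (c powr a * c\<^sup>2)"
    using c s by (simp add: powr_divide powr_add)
  have "0 < c powr a" "0 < (c + ?s) powr (a + 2)" "0 < Gamma a"
    using a c s by simp_all
  then show ?thesis
    unfolding pareto2_biv_def base pow Gamma_plus_2[OF a] using c by (simp add: field_simps power2_eq_square)
qed

lemma bayes_pred_eq_pareto2_biv:
  assumes a: "0 < a" and c: "0 < c" and A: "0 \<le> A" and B: "0 \<le> B" and y: "0 < y1" "0 < y2"
    and cond: "\<And>t. 0 < t \<Longrightarrow> cond_dens f t x y1 y2 = exponential_density (A * t) y1 * exponential_density (B * t) y2"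
    and post: "\<And>t. 0 < t \<Longrightarrow> posterior f \<alpha> \<beta> x t = c powr a / Gamma a * (t powr (a - 1) * exp (- (c * t)))"
  shows "bayes_pred f \<alpha> \<beta> x y1 y2 = pareto2_biv a (A / c) (B / c) y1 y2"
proof -
  define s where "s = A * y1 + B * y2"
  have s: "0 \<le> s" using A B y by (simp add: s_def)
  have integrand: "cond_dens f t x y1 y2 * posterior f \<alpha> \<beta> x t =
      A * B * c powr a / Gamma a * (t powr (a + 2 - 1) * exp (- ((c + s) * t)))" if "0 < t" for t
  proof -
    have "cond_dens f t x y1 y2 * posterior f \<alpha> \<beta> x t = A * B * c powr a / Gamma a *
        ((t * t * t powr (a - 1)) * (exp (- (y1 * (A * t))) * exp (- (y2 * (B * t))) * exp (- (c * t))))"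
      using that y by (simp add: cond post exponential_density_def mult_ac)
    also have "t * t * t powr (a - 1) = t powr (a + 2 - 1)"
    proof -
      have "t powr (a + 2 - 1) = t powr (a - 1) * t powr 2"
        by (subst powr_add[symmetric]) (simp add: algebra_simps)
      then show ?thesis
        using that by (simp add: power2_eq_square mult_ac)
    qed
    also have "exp (- (y1 * (A * t))) * exp (- (y2 * (B * t))) * exp (- (c * t)) = exp (- ((c + s) * t))"
      by (simp add: s_def exp_add[symmetric] algebra_simps)
    finally show ?thesis .
  qed
  have "bayes_pred f \<alpha> \<beta> x y1 y2 =
        (\<integral>t\<in>{0<..}. A * B * c powr a / Gamma a * (t powr (a + 2 - 1) * exp (- ((c + s) * t))) \<partial>lborel)"
    unfolding bayes_pred_def by (rule set_lebesgue_integral_cong) (auto simp: integrand)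
  also have "\<dots> = A * B * c powr a / Gamma a * (Gamma (a + 2) / (c + s) powr (a + 2))"
    using set_integral_powr_exp[of "a + 2" "c + s"] a c s by simp
  also have "\<dots> = pareto2_biv a (A / c) (B / c) y1 y2"
    using pareto2_biv_eq_Gamma_ratio[OF a c] s by (simp add: s_def)
  finally show ?thesis .
qed

theorem corollary1:
  fixes m n :: nat and \<alpha> \<beta> :: real
    and f :: "real \<Rightarrow> real \<Rightarrow> real \<Rightarrow> real \<Rightarrow> real"
  assumes "1 \<le> m" and "m + 2 \<le> n"
    and "(0 < \<alpha> \<and> 0 < \<beta>) \<or> (\<alpha> = 0 \<and> \<beta> = 0)"
    and f_nonneg: "\<And>\<theta> x y1 y2. 0 \<le> f \<theta> x y1 y2"
    and f_density: "\<And>\<theta>. 0 < \<theta> \<Longrightarrow>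
        distributed (sample_measure n \<theta>) lborel (\<lambda>\<omega>. (statX n m \<omega>, statY n m \<omega>))
          (\<lambda>(x, y1, y2). ennreal (f \<theta> x y1 y2))"
    and f_cont: "\<And>\<theta>. 0 < \<theta> \<Longrightarrow>
        continuous_on ({0<..} \<times> {0<..} \<times> {0<..}) (\<lambda>(x, y1, y2). f \<theta> x y1 y2)"
  shows "\<forall>x>0. \<forall>y1>0. \<forall>y2>0.
           bayes_pred f \<alpha> \<beta> x y1 y2 =
           pareto2_biv (real m + \<alpha>) (real (n - m) / (x + \<beta>)) (real (n - m - 1) / (x + \<beta>)) y1 y2"
proof (intro allI impI)
  fix x y1 y2 :: real
  assume x: "0 < x" and y: "0 < y1" "0 < y2"
  have f: "f t x' z1 z2 = order_stats_density n m t (x', z1, z2)"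
    if "0 < t" "0 < x'" "0 < z1" "0 < z2" for t x' z1 z2
    using continuous_density_eq_order_stats_density[OF that(1) assms(1,2) f_nonneg f_density f_cont] that
    by blast
  have a: "0 < real m + \<alpha>" and c: "0 < x + \<beta>"
    using assms(1,3) x by auto
  have marg: "marg_X f t x = erlang_density (m - 1) t x" if "0 < t" for t
    using that assms(2) x f by (intro marg_X_eq_erlang_density) auto
  have cond: "cond_dens f t x y1 y2 =
      exponential_density (real (n - m) * t) y1 * exponential_density (real (n - m - 1) * t) y2" if "0 < t" for t
    using that assms(2) x y f by (intro cond_dens_eq_exponential_densities) auto
  show "bayes_pred f \<alpha> \<beta> x y1 y2 =
      pareto2_biv (real m + \<alpha>) (real (n - m) / (x + \<beta>)) (real (n - m - 1) / (x + \<beta>)) y1 y2"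
    using posterior_eq_gamma_density[OF x a c assms(1) marg]
    by (intro bayes_pred_eq_pareto2_biv[OF a c _ _ y cond]) auto
qed

end
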